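(* Let $\sigma=(a_1,\ldots,a_s)$ be a partition of $r$ with $a_1\ge a_2\ge\cdots\ge a_s\ge1$ and let $H=H(n,r,q\mid\sigma)$ have classes $V_1,\ldots,V_n$. Let $B\subseteq V(H)$, let $B_i=B\cap V_i$ and $b_i=|B_i|$, where the classes are labelled so that $b_1\ge b_2\ge\cdots\ge b_n$. Let $E^*$ be an edge of $H$ such that for each $1\le i\le s$ the set $A_i=E^*\cap V_i$ has $|A_i|=a_i$, with $A_i\subseteq B_i$ when $a_i<b_i$ and $B_i\subseteq A_i$ when $a_i\ge b_i$. Then \[|E^*\cap B|=\max\{|E\cap B| : E\in E(H)\}.\]
   Context: A $\sigma$-hypergraph $H=H(n,r,q\mid\sigma)$, for a partition $\sigma=(a_1,\ldots,a_s)$ of $r$, is the $r$-uniform hypergraph whose vertex set is the disjoint union of $n$ classes $V_1,\ldots,V_n$, each of size $q$; an $r$-subset $K$ of vertices is an edge iff the multiset of non-zero values $|K\cap V_i|$ ($1\le i\le n$) equals $\sigma$. $E(H)$ denotes the edge set. *)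

theory Defs
  imports Main "HOL-Library.Multiset"
begin

text \<open>Vertices of H(n,r,q|sigma) are pairs (i,j) with class index i in {1..n}
  and position j in {1..q}; class V_i is cls q i.\<close>

definition cls :: "nat \<Rightarrow> nat \<Rightarrow> (nat \<times> nat) set" where
  "cls q i = {i} \<times> {1..q}"

definition verts :: "nat \<Rightarrow> nat \<Rightarrow> (nat \<times> nat) set" where
  "verts n q = (\<Union>i\<in>{1..n}. cls q i)"

definition is_partition :: "nat \<Rightarrow> nat list \<Rightarrow> bool" where
  "is_partition r \<sigma> \<longleftrightarrow> sum_list \<sigma> = r \<and> (\<forall>a\<in>set \<sigma>. 1 \<le> a)"

definition sigma_edges :: "nat \<Rightarrow> nat \<Rightarrow> nat \<Rightarrow> nat list \<Rightarrow> (nat \<times> nat) set set" where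
  "sigma_edges n r q \<sigma> = {K. K \<subseteq> verts n q \<and> card K = r \<and>
     filter_mset (\<lambda>x. x \<noteq> 0) (image_mset (\<lambda>i. card (K \<inter> cls q i)) (mset_set {1..n}))
       = mset \<sigma>}"

end

theory Submission
  imports Defs
begin

text \<open>Write \<open>b j = |B \<inter> V\<^sub>j|\<close> and \<open>c j = |E \<inter> V\<^sub>j|\<close>. Then \<open>|E \<inter> B| \<le> \<Sum>\<^sub>j min (c j) (b j)\<close>,
  with equality for \<open>E\<^sup>*\<close> since each of its class slices is nested with the corresponding
  slice of \<open>B\<close>. Slicing \<open>min\<close> into levels, the right-hand side is
  \<open>\<Sum>\<^sub>t |{j. t \<le> c j} \<inter> {j. t \<le> b j}|\<close>. For \<open>t \<ge> 1\<close> every edge has \<open>|{j. t \<le> c j}| = |{i. t \<le> a\<^sub>i}|\<close>;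
  for \<open>E\<^sup>*\<close> the profile is the sorted partition itself, so its level sets are initial
  segments, as are those of the sorted profile \<open>b\<close>. Two initial segments are nested, so each
  level term is as large as the cardinalities allow.\<close>

lemma card_superlevel_eq_size_parts:
  assumes "filter_mset (\<lambda>x. x \<noteq> 0) (image_mset c (mset_set {1..(n::nat)})) = mset \<sigma>"
    and "1 \<le> (t::nat)"
  shows "card {j\<in>{1..n}. t \<le> c j} = size (filter_mset ((\<le>) t) (mset \<sigma>))"
proof -
  have "filter_mset ((\<le>) t) (mset \<sigma>) = filter_mset ((\<le>) t) (image_mset c (mset_set {1..n}))"
    unfolding assms(1)[symmetric] filter_filter_mset
    by (rule filter_mset_cong) (use assms(2) in auto)
  also have "\<dots> = image_mset c (mset_set {j\<in>{1..n}. t \<le> c j})"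
    by (simp add: filter_mset_image_mset)
  finally show ?thesis by simp
qed

lemma profile_vanishes_beyond_parts:
  fixes c :: "nat \<Rightarrow> nat" and \<sigma> :: "nat list"
  assumes profile: "filter_mset (\<lambda>x. x \<noteq> 0) (image_mset c (mset_set {1..n})) = mset \<sigma>"
    and pos: "\<forall>a\<in>set \<sigma>. 1 \<le> a"
    and init: "\<forall>j\<in>{1..length \<sigma>}. c j = \<sigma> ! (j - 1)"
    and "length \<sigma> < j" "j \<le> n"
  shows "c j = 0"
proof -
  have "filter_mset ((\<le>) 1) (mset \<sigma>) = mset \<sigma>"
    using pos by (simp add: filter_mset_eq_conv)
  then have support: "card {j\<in>{1..n}. 1 \<le> c j} = length \<sigma>"
    using card_superlevel_eq_size_parts[OF profile, of 1] by simp
  moreover have "card {j\<in>{1..n}. 1 \<le> c j} \<le> card {1..n}"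
    by (rule card_mono) auto
  ultimately have "length \<sigma> \<le> n"
    by simp
  then have "{1..length \<sigma>} \<subseteq> {j\<in>{1..n}. 1 \<le> c j}"
    using init pos by (auto simp: Suc_le_eq)
  then have support_eq: "{1..length \<sigma>} = {j\<in>{1..n}. 1 \<le> c j}"
    by (intro card_subset_eq) (use support in auto)
  have "j \<notin> {j\<in>{1..n}. 1 \<le> c j}"
    using assms(4) unfolding support_eq[symmetric] by simp
  then show ?thesis
    using assms(4,5) by simp
qed

lemma antimono_on_sorted_profile:
  fixes c :: "nat \<Rightarrow> nat" and \<sigma> :: "nat list"
  assumes sorted: "\<forall>i j. i \<le> j \<longrightarrow> j < length \<sigma> \<longrightarrow> \<sigma> ! j \<le> \<sigma> ! i"
    and init: "\<forall>j\<in>{1..length \<sigma>}. c j = \<sigma> ! (j - 1)"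
    and vanish: "\<And>j. length \<sigma> < j \<Longrightarrow> j \<le> n \<Longrightarrow> c j = 0"
  shows "antimono_on {1..n} c"
proof (rule monotone_onI)
  fix i j assume "i \<in> {1..n}" "j \<in> {1..n}" "i \<le> j"
  then show "c j \<le> c i"
    using init sorted vanish[of j] by (cases "j \<le> length \<sigma>") auto
qed

lemma sum_min_eq_sum_card_levels:
  assumes "finite J" and "\<And>j. j \<in> J \<Longrightarrow> f j \<le> (q::nat)"
  shows "(\<Sum>j\<in>J. min (f j) (g j)) = (\<Sum>t\<in>{1..q}. card {j\<in>J. t \<le> f j \<and> t \<le> g j})"
proof -
  have "min (f j) (g j) = (\<Sum>t\<in>{1..q}. of_bool (t \<le> f j \<and> t \<le> g j))" if "j \<in> J" for j
  proof -
    have "{1..q} \<inter> {t. t \<le> f j \<and> t \<le> g j} = {1..min (f j) (g j)}"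
      using assms(2)[OF that] by auto
    then show ?thesis by simp
  qed
  then have "(\<Sum>j\<in>J. min (f j) (g j)) = (\<Sum>j\<in>J. \<Sum>t\<in>{1..q}. of_bool (t \<le> f j \<and> t \<le> g j))"
    by simp
  also have "\<dots> = (\<Sum>t\<in>{1..q}. \<Sum>j\<in>J. of_bool (t \<le> f j \<and> t \<le> g j))"
    by (rule sum.swap)
  also have "\<dots> = (\<Sum>t\<in>{1..q}. card {j\<in>J. t \<le> f j \<and> t \<le> g j})"
    using assms(1) by (simp add: Int_def)
  finally show ?thesis .
qed

lemma antimono_on_superlevels_nested:
  fixes d b :: "nat \<Rightarrow> 'a::linorder"
  assumes "antimono_on J d" and "antimono_on J b"
  shows "{j\<in>J. t \<le> d j} \<subseteq> {j\<in>J. t \<le> b j} \<or> {j\<in>J. t \<le> b j} \<subseteq> {j\<in>J. t \<le> d j}"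
proof (rule ccontr)
  assume "\<not> ?thesis"
  then obtain x y where "x \<in> J" "y \<in> J" "t \<le> d x" "\<not> t \<le> b x" "t \<le> b y" "\<not> t \<le> d y"
    by auto
  then show False
    using assms nat_le_linear[of x y] by (metis monotone_onD order_trans)
qed

lemma card_Int_eq_min_if_nested:
  assumes "finite X" "finite Y" "X \<subseteq> Y \<or> Y \<subseteq> X"
  shows "card (X \<inter> Y) = min (card X) (card Y)"
  using assms by (auto simp: Int_absorb1 Int_absorb2 min_def dest: card_mono)

lemma sum_min_le_sum_min_antimono:
  fixes b c d :: "nat \<Rightarrow> nat"
  assumes J: "finite J"
    and levels: "\<And>t. 1 \<le> t \<Longrightarrow> card {j\<in>J. t \<le> c j} = card {j\<in>J. t \<le> d j}"
    and anti_d: "antimono_on J d" and anti_b: "antimono_on J b"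
    and c_le: "\<And>j. j \<in> J \<Longrightarrow> c j \<le> q" and d_le: "\<And>j. j \<in> J \<Longrightarrow> d j \<le> q"
  shows "(\<Sum>j\<in>J. min (c j) (b j)) \<le> (\<Sum>j\<in>J. min (d j) (b j))"
proof -
  have "card {j\<in>J. t \<le> c j \<and> t \<le> b j} \<le> card {j\<in>J. t \<le> d j \<and> t \<le> b j}"
    if "t \<in> {1..q}" for t
  proof -
    let ?C = "{j\<in>J. t \<le> c j}" and ?D = "{j\<in>J. t \<le> d j}" and ?B = "{j\<in>J. t \<le> b j}"
    have "card {j\<in>J. t \<le> c j \<and> t \<le> b j} \<le> min (card ?C) (card ?B)"
      using J by (intro min.boundedI card_mono) auto
    also have "\<dots> = min (card ?D) (card ?B)"
      using levels that by simp
    also have "\<dots> = card (?D \<inter> ?B)"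
      using antimono_on_superlevels_nested[OF anti_d anti_b, of t] J
      by (simp add: card_Int_eq_min_if_nested)
    also have "?D \<inter> ?B = {j\<in>J. t \<le> d j \<and> t \<le> b j}"
      by auto
    finally show ?thesis .
  qed
  then have "(\<Sum>t\<in>{1..q}. card {j\<in>J. t \<le> c j \<and> t \<le> b j})
      \<le> (\<Sum>t\<in>{1..q}. card {j\<in>J. t \<le> d j \<and> t \<le> b j})"
    by (rule sum_mono)
  then show ?thesis
    using sum_min_eq_sum_card_levels[OF J c_le, where g = b]
      sum_min_eq_sum_card_levels[OF J d_le, where g = b]
    by simp
qed

lemma finite_cls: "finite (cls q i)"
  and card_cls: "card (cls q i) = q"
  by (auto simp: cls_def card_cartesian_product)

lemma card_Int_cls_le: "card (K \<inter> cls q i) \<le> q"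
  by (metis card_cls card_mono finite_cls inf_le2)

lemma finite_sigma_edges: "finite (sigma_edges n r q \<sigma>)"
  by (rule finite_subset[of _ "Pow (verts n q)"])
    (auto simp: sigma_edges_def verts_def finite_cls)

lemma sigma_edges_profile:
  assumes "E \<in> sigma_edges n r q \<sigma>"
  shows "filter_mset (\<lambda>x. x \<noteq> 0) (image_mset (\<lambda>j. card (E \<inter> cls q j)) (mset_set {1..n}))
    = mset \<sigma>"
  using assms unfolding sigma_edges_def by blast

lemma card_Int_eq_sum_cls:
  assumes "K \<subseteq> verts n q"
  shows "card (K \<inter> B) = (\<Sum>j\<in>{1..n}. card (K \<inter> cls q j \<inter> (B \<inter> cls q j)))"
proof -
  have "K \<inter> B = (\<Union>j\<in>{1..n}. K \<inter> cls q j \<inter> (B \<inter> cls q j))"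
    using assms by (auto simp: verts_def)
  also have "card \<dots> = (\<Sum>j\<in>{1..n}. card (K \<inter> cls q j \<inter> (B \<inter> cls q j)))"
    by (rule card_UN_disjoint) (auto simp: finite_cls cls_def)
  finally show ?thesis .
qed

lemma card_Int_le_sum_min_cls:
  assumes "K \<subseteq> verts n q"
  shows "card (K \<inter> B) \<le> (\<Sum>j\<in>{1..n}. min (card (K \<inter> cls q j)) (card (B \<inter> cls q j)))"
proof -
  have "card (K \<inter> B) = (\<Sum>j\<in>{1..n}. card (K \<inter> cls q j \<inter> (B \<inter> cls q j)))"
    by (rule card_Int_eq_sum_cls[OF assms])
  also have "\<dots> \<le> (\<Sum>j\<in>{1..n}. min (card (K \<inter> cls q j)) (card (B \<inter> cls q j)))"
    by (intro sum_mono min.boundedI card_mono) (auto simp: finite_cls)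
  finally show ?thesis .
qed

lemma card_Int_eq_sum_min_cls:
  assumes "K \<subseteq> verts n q"
    and "\<forall>j\<in>{1..n}. K \<inter> cls q j \<subseteq> B \<inter> cls q j \<or> B \<inter> cls q j \<subseteq> K \<inter> cls q j"
  shows "card (K \<inter> B) = (\<Sum>j\<in>{1..n}. min (card (K \<inter> cls q j)) (card (B \<inter> cls q j)))"
proof -
  have "card (K \<inter> B) = (\<Sum>j\<in>{1..n}. card (K \<inter> cls q j \<inter> (B \<inter> cls q j)))"
    by (rule card_Int_eq_sum_cls[OF assms(1)])
  also have "\<dots> = (\<Sum>j\<in>{1..n}. min (card (K \<inter> cls q j)) (card (B \<inter> cls q j)))"
    using assms(2) by (intro sum.cong refl card_Int_eq_min_if_nested) (auto simp: finite_cls)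
  finally show ?thesis .
qed

lemma sigma_edge_card_Int_le:
  assumes E: "E \<in> sigma_edges n r q \<sigma>" and E': "E' \<in> sigma_edges n r q \<sigma>"
    and anti_E': "antimono_on {1..n} (\<lambda>j. card (E' \<inter> cls q j))"
    and anti_B: "antimono_on {1..n} (\<lambda>j. card (B \<inter> cls q j))"
  shows "card (E \<inter> B) \<le> (\<Sum>j\<in>{1..n}. min (card (E' \<inter> cls q j)) (card (B \<inter> cls q j)))"
proof -
  have "card (E \<inter> B) \<le> (\<Sum>j\<in>{1..n}. min (card (E \<inter> cls q j)) (card (B \<inter> cls q j)))"
    using E by (intro card_Int_le_sum_min_cls) (simp add: sigma_edges_def)
  also have "\<dots> \<le> (\<Sum>j\<in>{1..n}. min (card (E' \<inter> cls q j)) (card (B \<inter> cls q j)))"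
  proof (rule sum_min_le_sum_min_antimono[OF _ _ anti_E' anti_B card_Int_cls_le card_Int_cls_le])
    fix t :: nat assume "1 \<le> t"
    then show "card {j\<in>{1..n}. t \<le> card (E \<inter> cls q j)} = card {j\<in>{1..n}. t \<le> card (E' \<inter> cls q j)}"
      using card_superlevel_eq_size_parts[OF sigma_edges_profile[OF E]]
        card_superlevel_eq_size_parts[OF sigma_edges_profile[OF E']] by simp
  qed simp
  finally show ?thesis .
qed

theorem lemma2p4:
  fixes n r q :: nat and \<sigma> :: "nat list" and B Estar :: "(nat \<times> nat) set"
  assumes part: "is_partition r \<sigma>"
    and sorted_parts: "\<forall>i j. i \<le> j \<longrightarrow> j < length \<sigma> \<longrightarrow> \<sigma> ! j \<le> \<sigma> ! i"
    and B_sub: "B \<subseteq> verts n q"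
    and b_sorted: "\<forall>i j. 1 \<le> i \<longrightarrow> i \<le> j \<longrightarrow> j \<le> n \<longrightarrow>
                      card (B \<inter> cls q j) \<le> card (B \<inter> cls q i)"
    and edge: "Estar \<in> sigma_edges n r q \<sigma>"
    and A_prop: "\<forall>i\<in>{1..length \<sigma>}.
        card (Estar \<inter> cls q i) = \<sigma> ! (i - 1) \<and>
        (\<sigma> ! (i - 1) < card (B \<inter> cls q i) \<longrightarrow> Estar \<inter> cls q i \<subseteq> B \<inter> cls q i) \<and>
        (card (B \<inter> cls q i) \<le> \<sigma> ! (i - 1) \<longrightarrow> B \<inter> cls q i \<subseteq> Estar \<inter> cls q i)"
  shows "card (Estar \<inter> B) = Max ((\<lambda>E. card (E \<inter> B)) ` sigma_edges n r q \<sigma>)"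
proof -
  let ?c = "\<lambda>j. card (Estar \<inter> cls q j)"
  have Estar_sub: "Estar \<subseteq> verts n q"
    using edge by (simp add: sigma_edges_def)
  have vanish: "?c j = 0" if "length \<sigma> < j" "j \<le> n" for j
    using profile_vanishes_beyond_parts[OF sigma_edges_profile[OF edge] _ _ that] part A_prop
    by (simp add: is_partition_def)
  have anti_Estar: "antimono_on {1..n} ?c"
    using A_prop by (intro antimono_on_sorted_profile[OF sorted_parts _ vanish]) simp
  have anti_B: "antimono_on {1..n} (\<lambda>j. card (B \<inter> cls q j))"
    using b_sorted by (intro monotone_onI) auto
  have "Estar \<inter> cls q j \<subseteq> B \<inter> cls q j \<or> B \<inter> cls q j \<subseteq> Estar \<inter> cls q j"
    if "j \<in> {1..n}" for j
    using A_prop vanish[of j] that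
    by (cases "j \<le> length \<sigma>") (auto simp: not_le not_less finite_cls)
  then have "card (Estar \<inter> B) = (\<Sum>j\<in>{1..n}. min (?c j) (card (B \<inter> cls q j)))"
    by (intro card_Int_eq_sum_min_cls[OF Estar_sub] ballI)
  then have "card (E \<inter> B) \<le> card (Estar \<inter> B)" if "E \<in> sigma_edges n r q \<sigma>" for E
    using sigma_edge_card_Int_le[OF that edge anti_Estar anti_B] by simp
  then show ?thesis
    using finite_sigma_edges edge by (intro Max_eqI[symmetric]) auto
qed

end
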